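(* Let $1\le k\le n-1$. Let $G_k$ be the network (of the type below) on $\{1,\dots,n\}$ whose links are exactly all pairs $\{a,b\}$ with $1\le a<b\le k$ (nodes $1,\dots,k$ form a mini fully connected network; nodes $k+1,\dots,n$ are isolated). Let $E$ be any set of $k$ unordered pairs of distinct nodes, none of which is a link of $G_k$, and let $G_k+E$ be the network with links those of $G_k$ together with $E$. Let $E^*=\{\{j,k+1\}:1\le j\le k\}$. Then $$\sum_{i=1}^n\Delta_i(G_k+E)\le\sum_{i=1}^n\Delta_i(G_k+E^* ),$$ where $G_k+E^*$ consists of a mini fully connected network on $\{1,\dots,k+1\}$ and $n-k-1$ isolated nodes.
   Context: Version-age model. A gossip network on a finite node set $\mathcal N$ is specified by source rates $\lambda_{0j}>0$ and gossip rates $\lambda_{ij}\ge 0$ ($i\neq j$; rate at which $i$ sends to $j$); $\lambda_s>0$ is the source's update rate. For nonempty $S\subseteq\mathcal N$ let $N(S)=\{i\in\mathcal N\setminus S:\ \sum_{j\in S}\lambda_{ij}>0\}$ and define $$\Delta_S=\frac{\lambda_s+\sum_{i\in N(S)}\big(\sum_{j\in S}\lambda_{ij}\big)\Delta_{S\cup\{i\}}}{\sum_{j\in S}\lambda_{0j}+\sum_{i\in N(S)}\sum_{j\in S}\lambda_{ij}}$$ (well defined by downward induction on $|S|$); $\Delta_i=\Delta_{\{i\}}$, and $\Delta_i(G)$ denotes this quantity in network $G$. Networks with uniform link rate: node set $\{1,\dots,n\}$, $\lambda_{0j}=\lambda/n$ for all $j$, and a set of links (unordered pairs of distinct nodes);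 for each link $\{a,b\}$, $\lambda_{ab}=\lambda_{ba}=\lambda/n$, and $\lambda_{ab}=0$ otherwise. A node with no links is isolated. *)

theory Defs
  imports Complex_Main
begin

text \<open>General version-age network: node set N, source rates l0 j, gossip rates l i j
  (rate at which i sends to j), source update rate ls.\<close>

definition nbr :: "'a set \<Rightarrow> ('a \<Rightarrow> 'a \<Rightarrow> real) \<Rightarrow> 'a set \<Rightarrow> 'a set" where
  "nbr N l S = {i \<in> N - S. (\<Sum>j\<in>S. l i j) > 0}"

text \<open>Downward recursion on |S|, with fuel = card N - card S.\<close>
fun dage :: "nat \<Rightarrow> 'a set \<Rightarrow> ('a \<Rightarrow> real) \<Rightarrow> ('a \<Rightarrow> 'a \<Rightarrow> real) \<Rightarrow> real \<Rightarrow> 'a set \<Rightarrow> real" where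
  "dage 0 N l0 l ls S = ls / (\<Sum>j\<in>S. l0 j)"
| "dage (Suc m) N l0 l ls S =
     (ls + (\<Sum>i\<in>nbr N l S. (\<Sum>j\<in>S. l i j) * dage m N l0 l ls (insert i S)))
     / ((\<Sum>j\<in>S. l0 j) + (\<Sum>i\<in>nbr N l S. \<Sum>j\<in>S. l i j))"

definition Delta :: "'a set \<Rightarrow> ('a \<Rightarrow> real) \<Rightarrow> ('a \<Rightarrow> 'a \<Rightarrow> real) \<Rightarrow> real \<Rightarrow> 'a set \<Rightarrow> real" where
  "Delta N l0 l ls S = dage (card N - card S) N l0 l ls S"

definition unif_rate :: "nat \<Rightarrow> real \<Rightarrow> nat set set \<Rightarrow> nat \<Rightarrow> nat \<Rightarrow> real" where
  "unif_rate n lam L i j = (if i \<noteq> j \<and> {i, j} \<in> L then lam / real n else 0)"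

definition Delta_i :: "nat \<Rightarrow> real \<Rightarrow> real \<Rightarrow> nat set set \<Rightarrow> nat \<Rightarrow> real" where
  "Delta_i n lam ls L i = Delta {1..n} (\<lambda>_. lam / real n) (unif_rate n lam L) ls {i}"

definition mini_full :: "nat \<Rightarrow> nat set set" where
  "mini_full k = {{a, b} | a b. 1 \<le> a \<and> a < b \<and> b \<le> k}"

definition star_edges :: "nat \<Rightarrow> nat set set" where
  "star_edges k = {{j, k + 1} | j. 1 \<le> j \<and> j \<le> k}"

end

theory Submission
  imports Defs "HOL-Analysis.Harmonic_Numbers"
begin

text \<open>
  Measured in units of \<open>n \<lambda>\<^sub>s / \<lambda>\<close>, the version ages obey a recursion whose
  coefficients are numbers of links. Comparing it with the recursion inside a clique of size
  \<open>k\<close> gives upper bounds for every set meeting the clique, and these are exact for an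
  isolated clique, where the ages of its single nodes add up to the harmonic number
  \<open>harm k\<close>. Hence the right-hand side equals \<open>harm (k + 1) + (n - k - 1)\<close>.

  On the left, nodes untouched by \<open>E\<close> have age at most 1 and the clique contributes at most
  \<open>harm k\<close>. If \<open>E\<close> touches a single outside node, that node completes a clique of size
  \<open>k + 1\<close>. An outside node with \<open>d\<close> links has age at most \<open>(1 + d/2) / (1 + d)\<close>,
  and by convexity this suffices when \<open>E\<close> touches three or more outside nodes. With exactly
  two touched nodes one also uses that the clique nodes linked to them are younger; for
  \<open>k \<le> 6\<close> the resulting inequalities are checked on the exact values of the bounds.
\<close>

lemma average_with_recip_bounds:
  fixes c r V :: real
  assumes "0 < c" "0 \<le> r" "V \<le> 1 / c"
  shows "V \<le> (1 + r * V) / (c + r)" and "(1 + r * V) / (c + r) \<le> 1 / c"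
proof -
  have cV: "c * V \<le> 1" using assms by (simp add: field_simps)
  show "V \<le> (1 + r * V) / (c + r)"
    using assms cV by (simp add: field_simps)
  have "r * (c * V) \<le> r" using cV assms(2) by (simp add: mult_left_le)
  then show "(1 + r * V) / (c + r) \<le> 1 / c"
    using assms by (simp add: field_simps)
qed

lemma affine_ratio_antimono:
  fixes c w w' \<beta> :: real
  assumes "0 < c" "0 \<le> w" "w \<le> w'" "\<beta> * c \<le> 1"
  shows "(1 + w' * \<beta>) / (c + w') \<le> (1 + w * \<beta>) / (c + w)"
proof -
  have "(w' - w) * (\<beta> * c) \<le> (w' - w) * 1"
    using assms by (intro mult_left_mono) auto
  then have "(1 + w' * \<beta>) * (c + w) \<le> (1 + w * \<beta>) * (c + w')"
    by (simp add: algebra_simps)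
  then show ?thesis using assms by (simp add: divide_simps)
qed

lemma average_le_of_shifted_weights:
  fixes c R W1 W2 V V' :: real
  assumes "0 < c" "0 \<le> R" "R \<le> W1" "0 \<le> W2" "V' \<le> V"
    and V: "V = (1 + R * V') / (c + R)"
  shows "(1 + (W1 * V' + W2 * V)) / (c + (W1 + W2)) \<le> V"
proof -
  have "(c + R) * V = 1 + R * V'" using assms by (simp add: V)
  moreover have "(W1 - R) * V' \<le> (W1 - R) * V" using assms by (intro mult_left_mono) auto
  ultimately have "1 + (W1 * V' + W2 * V) \<le> (c + (W1 + W2)) * V"
    by (simp add: algebra_simps)
  then show ?thesis using assms by (simp add: pos_divide_le_eq mult.commute)
qed

lemma average_le_linear_bound:
  fixes a u e k :: real
  assumes "1 \<le> k" "0 \<le> e" "e \<le> 2" "u \<le> a"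
  shows "(k * a + e * u) / (k + e) \<le> a - e * (a - u) / (k + 2)"
proof -
  have "(k * a + e * u) / (k + e) = a - e * (a - u) / (k + e)"
    using assms by (simp add: field_simps)
  moreover have "e * (a - u) / (k + 2) \<le> e * (a - u) / (k + e)"
    using assms by (intro divide_left_mono) auto
  ultimately show ?thesis by simp
qed

lemma recip_pair_le:
  fixes a b c :: real
  assumes "0 < c" "1 \<le> a" "1 \<le> b"
  shows "1 / (c + a) + 1 / (c + b) \<le> 1 / (c + 1) + 1 / (c + a + b - 1)"
proof -
  have "(c + 1) * (c + a + b - 1) \<le> (c + a) * (c + b)"
    using mult_nonneg_nonneg[of "a - 1" "b - 1"] assms by (simp add: algebra_simps)
  then have "1 / ((c + a) * (c + b)) \<le> 1 / ((c + 1) * (c + a + b - 1))"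
    using assms by (intro divide_left_mono) auto
  then have "(2 * c + a + b) * (1 / ((c + a) * (c + b)))
      \<le> (2 * c + a + b) * (1 / ((c + 1) * (c + a + b - 1)))"
    using assms by (intro mult_left_mono) auto
  then show ?thesis using assms by (simp add: field_simps)
qed

lemma sum_recip_succ_le:
  fixes d :: "'a \<Rightarrow> real"
  assumes "finite Q" "Q \<noteq> {}" "\<forall>x\<in>Q. 1 \<le> d x"
  shows "(\<Sum>x\<in>Q. 1 / (1 + d x))
    \<le> (real (card Q) - 1) / 2 + 1 / (1 + (\<Sum>x\<in>Q. d x) - (real (card Q) - 1))"
  using assms
proof (induction Q rule: finite_ne_induct)
  case (insert x F)
  define T where "T = (\<Sum>y\<in>F. d y) - (real (card F) - 1)"
  have "real (card F) \<le> (\<Sum>y\<in>F. d y)"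
    using sum_mono[of F "\<lambda>_. 1" d] insert by simp
  then have "1 \<le> T" by (simp add: T_def)
  have "(\<Sum>y\<in>insert x F. 1 / (1 + d y)) \<le> 1 / (1 + d x) + 1 / (1 + T) + (real (card F) - 1) / 2"
    using insert by (simp add: T_def)
  also have "\<dots> \<le> 1 / 2 + 1 / (d x + T) + (real (card F) - 1) / 2"
    using recip_pair_le[of 1 "d x" T] insert \<open>1 \<le> T\<close> by simp
  also have "\<dots> = (real (card (insert x F)) - 1) / 2
      + 1 / (1 + (\<Sum>y\<in>insert x F. d y) - (real (card (insert x F)) - 1))"
    using insert by (simp add: T_def algebra_simps add_divide_distrib diff_divide_distrib)
  finally show ?case .
qed simp

lemma affine_fraction_split:
  fixes b c p u :: real
  assumes "c + p \<noteq> 0"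
  shows "(b + p * u) / (c + p) = u + (b - c * u) * (1 / (c + p))"
  using assms by (simp add: field_simps)

lemma two_fractions_no_link:
  fixes p q u :: real
  assumes "1 \<le> p" "1 \<le> q" "u \<le> 1"
  shows "(1 + p * u) / (1 + p) + (1 + q * u) / (1 + q) \<le> 2 * u + (1 - u) * (1 / 2 + 1 / (p + q))"
proof -
  have "(1 + p * u) / (1 + p) + (1 + q * u) / (1 + q) = 2 * u + (1 - u) * (1 / (1 + p) + 1 / (1 + q))"
    using affine_fraction_split[of 1 p 1 u] affine_fraction_split[of 1 q 1 u] assms
    by (simp add: algebra_simps)
  also have "\<dots> \<le> 2 * u + (1 - u) * (1 / 2 + 1 / (p + q))"
    using recip_pair_le[of 1 p q] assms by (intro add_left_mono mult_left_mono) auto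
  finally show ?thesis .
qed

lemma two_fractions_link:
  fixes p q u W :: real
  assumes "1 \<le> p" "1 \<le> q" "W \<le> 1 / 2" "u \<le> 3 / 4"
  shows "(1 + p * u + W) / (2 + p) + (1 + q * u + W) / (2 + q)
    \<le> 2 * u + (3 / 2 - 2 * u) * (1 / 3 + 1 / (p + q + 1))"
proof -
  have "(1 + p * u + W) / (2 + p) + (1 + q * u + W) / (2 + q)
      \<le> (3 / 2 + p * u) / (2 + p) + (3 / 2 + q * u) / (2 + q)"
    using assms by (intro add_mono[OF divide_right_mono divide_right_mono]) auto
  also have "\<dots> = 2 * u + (3 / 2 - 2 * u) * (1 / (2 + p) + 1 / (2 + q))"
    using affine_fraction_split[of 2 p "3 / 2" u] affine_fraction_split[of 2 q "3 / 2" u] assms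
    by (simp add: algebra_simps)
  also have "\<dots> \<le> 2 * u + (3 / 2 - 2 * u) * (1 / 3 + 1 / (p + q + 1))"
    using recip_pair_le[of 2 p q] assms by (intro add_left_mono mult_left_mono) (auto simp: add_ac)
  finally show ?thesis .
qed

section \<open>Clique bounds\<close>

text \<open>
  \<open>clique_bound k d m\<close> bounds the age of a set consisting of \<open>k - m\<close> nodes of a
  \<open>k\<close>-clique and \<open>d\<close> further nodes: each of the \<open>m\<close> missing clique nodes has
  \<open>k - m\<close> links into the set.
\<close>

fun clique_bound :: "nat \<Rightarrow> nat \<Rightarrow> nat \<Rightarrow> real" where
  "clique_bound k d 0 = 1 / (real k + real d)"
| "clique_bound k d (Suc m) = (1 + real (k - Suc m) * real (Suc m) * clique_bound k d m)
      / (real (k - Suc m) + real d + real (k - Suc m) * real (Suc m))"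

lemma clique_bound_nonneg: "clique_bound k d m \<ge> 0"
  by (induction m) (auto intro!: divide_nonneg_nonneg)

lemma clique_bound_le: "m < k \<Longrightarrow> clique_bound k d m \<le> 1 / (real (k - m) + real d)"
proof (induction m)
  case (Suc m)
  define c where "c = real (k - Suc m) + real d"
  have "c \<ge> 1" using Suc.prems by (simp add: c_def)
  have "real (k - m) + real d = c + 1" using Suc.prems by (simp add: c_def of_nat_diff)
  then have "clique_bound k d m \<le> 1 / (c + 1)" using Suc by simp
  also have "\<dots> \<le> 1 / c" using \<open>c \<ge> 1\<close> by (simp add: frac_le)
  finally show ?case
    using average_with_recip_bounds(2)[of c] \<open>c \<ge> 1\<close> by (simp add: c_def)
qed simp

lemma clique_bound_Suc_mono: "Suc m < k \<Longrightarrow> clique_bound k d m \<le> clique_bound k d (Suc m)"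
proof -
  assume m: "Suc m < k"
  define c where "c = real (k - Suc m) + real d"
  have "c \<ge> 1" using m by (simp add: c_def)
  have "clique_bound k d m \<le> 1 / (real (k - m) + real d)" using m by (intro clique_bound_le) simp
  also have "\<dots> \<le> 1 / c" using m \<open>c \<ge> 1\<close> by (intro divide_left_mono) (auto simp: c_def)
  finally show ?thesis
    using average_with_recip_bounds(1)[of c] \<open>c \<ge> 1\<close> by (simp add: c_def)
qed

lemma clique_bound_antimono:
  "m < k \<Longrightarrow> d \<le> d' \<Longrightarrow> clique_bound k d' m \<le> clique_bound k d m"
proof (induction m)
  case 0 then show ?case by (simp add: frac_le)
next
  case (Suc m)
  define s where "s = real (k - Suc m)"
  define r where "r = s * real (Suc m)"
  have "s \<ge> 1" "r \<ge> 0" using Suc.prems by (auto simp: s_def r_def)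
  have "1 + r * clique_bound k d' m \<le> 1 + r * clique_bound k d m"
    using Suc \<open>r \<ge> 0\<close> by (simp add: mult_left_mono)
  moreover have "0 \<le> 1 + r * clique_bound k d m"
    using \<open>r \<ge> 0\<close> clique_bound_nonneg by simp
  ultimately have "(1 + r * clique_bound k d' m) / (s + real d' + r)
      \<le> (1 + r * clique_bound k d m) / (s + real d + r)"
    using Suc.prems \<open>s \<ge> 1\<close> \<open>r \<ge> 0\<close> by (intro frac_le) auto
  then show ?case by (simp add: s_def r_def)
qed

lemma clique_bound_last:
  assumes "2 \<le> k"
  shows "clique_bound k d (k - 1) = (1 + real (k - 1) * clique_bound k d (k - 2)) / (real k + real d)"
proof -
  obtain j where k: "k = Suc (Suc j)" using assms by (metis add_2_eq_Suc le_Suc_ex)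
  show ?thesis by (simp add: k algebra_simps)
qed

lemma clique_total_rec:
  assumes "1 \<le> k"
  shows "real k * clique_bound k 0 (k - 1) = 1 + real (k - 1) * clique_bound k 0 (k - 2)"
proof (cases "k = 1")
  case False
  then have "2 \<le> k" using assms by simp
  then have "clique_bound k 0 (k - 1) = (1 + real (k - 1) * clique_bound k 0 (k - 2)) / real k"
    using clique_bound_last[of k 0] by simp
  then show ?thesis using \<open>2 \<le> k\<close> by simp
qed simp

lemma clique_bound_harm:
  "m < k \<Longrightarrow> real (Suc m) * clique_bound k 0 m = harm k - harm (k - Suc m)"
proof (induction m)
  case 0
  then obtain j where "k = Suc j" by (cases k) auto
  then show ?case by (simp add: harm_Suc divide_inverse)
next
  case (Suc m)
  obtain j where j: "k - Suc m = Suc j" using Suc.prems by (metis Suc_diff_Suc zero_less_diff)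
  define s where "s = real (Suc j)"
  have IH: "real (Suc m) * clique_bound k 0 m = harm k - (harm j + 1 / s)"
    using Suc j by (simp add: harm_Suc s_def divide_inverse)
  define V where "V = clique_bound k 0 m"
  have cb: "clique_bound k 0 (Suc m) = (1 + s * (real (Suc m) * V)) / (s * real (Suc (Suc m)))"
    using j by (simp add: s_def V_def algebra_simps)
  have "s > 0" by (simp add: s_def)
  then have "real (Suc (Suc m)) * clique_bound k 0 (Suc m) = 1 / s + real (Suc m) * V"
    unfolding cb by (simp add: field_simps del: of_nat_Suc)
  moreover have "k - Suc (Suc m) = j" using j by simp
  ultimately show ?case using IH by (simp add: V_def)
qed

corollary clique_total_harm: "1 \<le> k \<Longrightarrow> real k * clique_bound k 0 (k - 1) = harm k"
  using clique_bound_harm[of "k - 1" k] by (simp add: harm_def)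

lemma harm_div_Suc_antimono:
  assumes "1 \<le> m" "m \<le> k"
  shows "harm k / (real k + 1) \<le> harm m / (real m + 1)"
  using assms(2)
proof (induction k rule: dec_induct)
  case (step j)
  have "1 \<le> (harm j :: real)" using harm_mono[of 1 j] step assms(1) by (simp add: harm_expand)
  moreover have "harm (Suc j) * (real j + 1) = harm j * (real j + 1) + 1"
    by (simp add: harm_Suc field_simps)
  ultimately have "harm (Suc j) * (real j + 1) \<le> harm j * (real (Suc j) + 1)"
    by (simp add: algebra_simps)
  then have "harm (Suc j) / (real (Suc j) + 1) \<le> harm j / (real j + 1)"
    by (simp add: divide_simps)
  then show ?case using step by linarith
qed simp

lemma cross_clique_bound_le_harm:
  assumes "2 \<le> k"
  shows "clique_bound k 1 (k - 1) \<le> harm k / (real k + 1)"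
proof -
  have "clique_bound k 1 (k - 1) = (1 + real (k - 1) * clique_bound k 1 (k - 2)) / (real k + 1)"
    using clique_bound_last[OF assms, of 1] by simp
  also have "\<dots> \<le> (1 + real (k - 1) * clique_bound k 0 (k - 2)) / (real k + 1)"
    using assms by (intro divide_right_mono add_left_mono mult_left_mono clique_bound_antimono) auto
  also have "1 + real (k - 1) * clique_bound k 0 (k - 2) = harm k"
    using clique_total_rec[of k] clique_total_harm[of k] assms by simp
  finally show ?thesis .
qed

lemma cross_clique_bound_le_large:
  assumes "7 \<le> k"
  shows "clique_bound k 1 (k - 1) \<le> 363 / 1120"
proof -
  have "clique_bound k 1 (k - 1) \<le> harm k / (real k + 1)"
    using assms by (intro cross_clique_bound_le_harm) simp
  also have "\<dots> \<le> harm 7 / (real 7 + 1)" using assms by (intro harm_div_Suc_antimono) auto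
  also have "\<dots> = 363 / 1120" by (simp add: harm_expand)
  finally show ?thesis .
qed

section \<open>Age systems\<close>

text \<open>
  The recursion of \<open>Delta\<close> when every source rate, every link rate and the update rate
  equal 1; \<open>links_into S i\<close> below is then the rate at which \<open>i\<close> gossips into \<open>S\<close>.
\<close>

locale age_system =
  fixes N :: "'a set" and adj :: "'a \<Rightarrow> 'a \<Rightarrow> bool" and D :: "'a set \<Rightarrow> real"
  assumes finite_nodes: "finite N"
    and age_rec: "\<And>S. S \<subseteq> N \<Longrightarrow> S \<noteq> {} \<Longrightarrow> D S =
      (1 + (\<Sum>i\<in>N - S. real (card {j\<in>S. adj i j}) * D (insert i S)))
      / (real (card S) + (\<Sum>i\<in>N - S. real (card {j\<in>S. adj i j})))"
begin

abbreviation links_into :: "'a set \<Rightarrow> 'a \<Rightarrow> real" where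
  "links_into S i \<equiv> real (card {j\<in>S. adj i j})"

definition nbrs :: "'a \<Rightarrow> 'a set" where
  "nbrs x = {i \<in> N - {x}. adj i x}"

definition clique :: "'a set \<Rightarrow> bool" where
  "clique C \<longleftrightarrow> C \<subseteq> N \<and> (\<forall>a\<in>C. \<forall>b\<in>C. a \<noteq> b \<longrightarrow> adj a b)"

lemma clique_subset: "clique C \<Longrightarrow> C \<subseteq> N"
  by (simp add: clique_def)

lemma clique_adj: "clique C \<Longrightarrow> a \<in> C \<Longrightarrow> b \<in> C \<Longrightarrow> a \<noteq> b \<Longrightarrow> adj a b"
  by (simp add: clique_def)

lemma finite_nbrs: "finite (nbrs x)"
  using finite_nodes by (simp add: nbrs_def)

lemma card_ge_1: "S \<subseteq> N \<Longrightarrow> S \<noteq> {} \<Longrightarrow> real (card S) \<ge> 1"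
  using finite_nodes finite_subset[of S N] by (simp add: Suc_le_eq card_gt_0_iff)

lemma age_le_of_extensions:
  assumes S: "S \<subseteq> N" "S \<noteq> {}"
    and ext: "\<And>i. i \<in> N - S \<Longrightarrow> links_into S i > 0 \<Longrightarrow> D (insert i S) \<le> b i"
  shows "D S \<le> (1 + (\<Sum>i\<in>N - S. links_into S i * b i))
                / (real (card S) + (\<Sum>i\<in>N - S. links_into S i))"
proof -
  have "(\<Sum>i\<in>N - S. links_into S i * D (insert i S)) \<le> (\<Sum>i\<in>N - S. links_into S i * b i)"
  proof (rule sum_mono)
    fix i assume "i \<in> N - S"
    then show "links_into S i * D (insert i S) \<le> links_into S i * b i"
      using ext[of i] by (cases "links_into S i > 0") (simp_all add: mult_left_mono)
  qed
  moreover have "0 \<le> (\<Sum>i\<in>N - S. links_into S i)" by (simp add: sum_nonneg)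
  ultimately show ?thesis unfolding age_rec[OF S] using card_ge_1[OF S] by (simp add: divide_right_mono)
qed

lemma age_le_uniform_extensions:
  assumes S: "S \<subseteq> N" "S \<noteq> {}" and \<beta>: "\<beta> * real (card S) \<le> 1"
    and ext: "\<And>i. i \<in> N - S \<Longrightarrow> links_into S i > 0 \<Longrightarrow> D (insert i S) \<le> \<beta>"
    and w: "0 \<le> w" "w \<le> (\<Sum>i\<in>N - S. links_into S i)"
  shows "D S \<le> (1 + w * \<beta>) / (real (card S) + w)"
proof -
  have "D S \<le> (1 + (\<Sum>i\<in>N - S. links_into S i) * \<beta>) / (real (card S) + (\<Sum>i\<in>N - S. links_into S i))"
    using age_le_of_extensions[OF S ext] by (simp add: sum_distrib_right)
  also have "\<dots> \<le> (1 + w * \<beta>) / (real (card S) + w)"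
    using card_ge_1[OF S] w \<beta> by (intro affine_ratio_antimono) auto
  finally show ?thesis .
qed

lemma age_le_inverse_card: "S \<subseteq> N \<Longrightarrow> S \<noteq> {} \<Longrightarrow> D S \<le> 1 / real (card S)"
proof (induction "card (N - S)" arbitrary: S rule: less_induct)
  case less
  have "finite S" using finite_nodes less.prems finite_subset by blast
  have "D S \<le> (1 + 0 * (1 / real (card S))) / (real (card S) + 0)"
  proof (rule age_le_uniform_extensions)
    fix i assume i: "i \<in> N - S"
    have "card (N - insert i S) < card (N - S)"
      using i finite_nodes by (intro psubset_card_mono) auto
    then have "D (insert i S) \<le> 1 / real (card (insert i S))"
      using less i by auto
    also have "\<dots> \<le> 1 / real (card S)"
      using i \<open>finite S\<close> card_ge_1[OF less.prems] by (simp add: frac_le)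
    finally show "D (insert i S) \<le> 1 / real (card S)" .
  qed (use less.prems card_ge_1[OF less.prems] in \<open>auto simp: sum_nonneg\<close>)
  then show ?case by simp
qed

lemma age_singleton:
  assumes "x \<in> N"
  shows "D {x} = (1 + (\<Sum>i\<in>nbrs x. D {x, i})) / (1 + real (card (nbrs x)))"
proof -
  have links: "links_into {x} i = (if adj i x then 1 else 0)" for i
  proof -
    have "{j\<in>{x}. adj i j} = (if adj i x then {x} else {})" by auto
    then show ?thesis by simp
  qed
  have fin: "finite (N - {x})" using finite_nodes by simp
  have "(\<Sum>i\<in>N - {x}. links_into {x} i * D (insert i {x}))
      = (\<Sum>i\<in>N - {x}. if adj i x then D {x, i} else 0)"
    unfolding links by (rule sum.cong) (auto simp: insert_commute)
  also have "\<dots> = (\<Sum>i\<in>nbrs x. D {x, i})"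
    unfolding nbrs_def by (rule sum.inter_filter[OF fin, symmetric])
  moreover have "(\<Sum>i\<in>N - {x}. links_into {x} i) = (\<Sum>i\<in>N - {x}. if adj i x then 1 else 0)"
    unfolding links ..
  moreover have "\<dots> = real (card (nbrs x))"
    unfolding nbrs_def sum.inter_filter[OF fin, symmetric] by simp
  ultimately show ?thesis using age_rec[of "{x}"] assms by simp
qed

lemma age_singleton_le:
  assumes "x \<in> N"
  shows "D {x} \<le> (1 + real (card (nbrs x)) / 2) / (1 + real (card (nbrs x)))"
proof -
  have "(\<Sum>i\<in>nbrs x. D {x, i}) \<le> (\<Sum>i\<in>nbrs x. 1 / 2)"
  proof (rule sum_mono)
    fix i assume "i \<in> nbrs x"
    then have "{x, i} \<subseteq> N" "i \<noteq> x" using assms by (auto simp: nbrs_def)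
    then show "D {x, i} \<le> 1 / 2" using age_le_inverse_card[of "{x, i}"] by simp
  qed
  then show ?thesis unfolding age_singleton[OF assms] by (intro divide_right_mono) auto
qed

lemma links_into_clique:
  assumes "clique C" "i \<in> C - S" "finite S"
  shows "real (card (S \<inter> C)) \<le> links_into S i"
proof -
  have "adj i j" if "j \<in> S \<inter> C" for j
    using clique_adj[OF assms(1), of i j] assms(2) that by auto
  then have "S \<inter> C \<subseteq> {j\<in>S. adj i j}" by auto
  then show ?thesis using assms(3) by (simp add: card_mono)
qed

lemma age_le_of_clique_extensions:
  assumes S: "S \<subseteq> N" "S \<noteq> {}" and "C \<subseteq> N"
    and links: "\<And>i. i \<in> C - S \<Longrightarrow> real s \<le> links_into S i"
    and in_C: "\<And>i. i \<in> C - S \<Longrightarrow> D (insert i S) \<le> V'"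
    and out_C: "\<And>i. i \<in> N - S - C \<Longrightarrow> D (insert i S) \<le> V"
    and "V' \<le> V"
    and V: "V = (1 + real s * real (card (C - S)) * V') / (real (card S) + real s * real (card (C - S)))"
  shows "D S \<le> V"
proof -
  define W1 where "W1 = (\<Sum>i\<in>C - S. links_into S i)"
  define W2 where "W2 = (\<Sum>i\<in>N - S - C. links_into S i)"
  have sum_split: "(\<Sum>i\<in>N - S. f i) = (\<Sum>i\<in>C - S. f i) + (\<Sum>i\<in>N - S - C. f i)"
    for f :: "'a \<Rightarrow> real"
  proof -
    have "C - S \<subseteq> N - S" "(N - S) - (C - S) = N - S - C" using \<open>C \<subseteq> N\<close> by auto
    then show ?thesis using sum.subset_diff[of "C - S" "N - S" f] finite_nodes by simp
  qed
  have ext: "D (insert i S) \<le> (if i \<in> C then V' else V)"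
    if "i \<in> N - S" "links_into S i > 0" for i
    using that in_C out_C by auto
  have "D S \<le> (1 + (\<Sum>i\<in>N - S. links_into S i * (if i \<in> C then V' else V)))
                  / (real (card S) + (\<Sum>i\<in>N - S. links_into S i))"
    by (rule age_le_of_extensions[OF S ext])
  also have "\<dots> = (1 + (W1 * V' + W2 * V)) / (real (card S) + (W1 + W2))"
    unfolding sum_split W1_def W2_def sum_distrib_right by simp
  also have "\<dots> \<le> V"
  proof (rule average_le_of_shifted_weights)
    show "real s * real (card (C - S)) \<le> W1"
      using sum_mono[of "C - S" "\<lambda>_. real s"] links by (simp add: W1_def mult.commute)
  qed (use card_ge_1[OF S] \<open>V' \<le> V\<close> V in \<open>auto simp: W2_def sum_nonneg\<close>)
  finally show ?thesis .
qed

lemma age_le_clique_bound: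
  assumes C: "clique C" and "S \<subseteq> N" "S \<inter> C \<noteq> {}"
  shows "D S \<le> clique_bound (card C) (card (S - C)) (card (C - S))"
  using assms(2,3)
proof (induction "card (N - S)" arbitrary: S rule: less_induct)
  case less
  define k where "k = card C"
  define d where "d = card (S - C)"
  have fin: "finite S" "finite C"
    using less.prems clique_subset[OF C] finite_nodes finite_subset by auto
  have split_S: "card S = card (S \<inter> C) + d"
    using fin by (simp add: d_def card_Int_Diff)
  have split_C: "k = card (S \<inter> C) + card (C - S)"
    using fin by (simp add: k_def Int_commute card_Int_Diff)
  show ?case
  proof (cases "C - S = {}")
    case True
    have "S \<noteq> {}" using less.prems(2) by blast
    then have "D S \<le> 1 / real (card S)" using age_le_inverse_card less.prems(1) by blast
    moreover have "card S = k + d"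
      using True split_S split_C by (simp add: Int_absorb1 k_def Diff_eq_empty_iff)
    ultimately show ?thesis unfolding True by (simp add: k_def d_def)
  next
    case False
    then obtain m where m: "card (C - S) = Suc m"
      using fin by (metis card_0_eq finite_Diff not0_implies_Suc)
    have "S \<inter> C \<noteq> {}" using less.prems(2) .
    then have "card (S \<inter> C) > 0" using fin by (simp add: card_gt_0_iff)
    then have s: "card (S \<inter> C) = k - Suc m" "Suc m < k" using split_C m by auto
    have IH: "D (insert i S) \<le> clique_bound k (card (insert i S - C)) (card (C - insert i S))"
      if "i \<in> N - S" for i
    proof -
      have "card (N - insert i S) < card (N - S)"
        using that finite_nodes by (intro psubset_card_mono) auto
      moreover have "insert i S \<subseteq> N" "insert i S \<inter> C \<noteq> {}" using that less.prems by auto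
      ultimately show ?thesis unfolding k_def by (rule less.hyps)
    qed
    show ?thesis
    proof (rule age_le_of_clique_extensions[OF less.prems(1) _ clique_subset[OF C]])
      fix i assume i: "i \<in> C - S"
      show "real (card (S \<inter> C)) \<le> links_into S i" using links_into_clique[OF C i fin(1)] .
      have "C - insert i S = (C - S) - {i}" "insert i S - C = S - C" using i by auto
      then show "D (insert i S) \<le> clique_bound k d m"
        using IH[of i] i m fin clique_subset[OF C] by (auto simp: card_Diff_singleton d_def)
    next
      fix i assume i: "i \<in> N - S - C"
      have "insert i S - C = insert i (S - C)" "C - insert i S = C - S" using i by auto
      moreover have "card (insert i (S - C)) = Suc d" using i fin by (simp add: d_def)
      ultimately have "D (insert i S) \<le> clique_bound k (Suc d) (Suc m)" using IH[of i] i m by simp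
      also have "\<dots> \<le> clique_bound k d (Suc m)" using s by (intro clique_bound_antimono) auto
      finally show "D (insert i S) \<le> clique_bound (card C) (card (S - C)) (card (C - S))"
        by (simp add: k_def d_def m)
    next
      show "clique_bound k d m \<le> clique_bound (card C) (card (S - C)) (card (C - S))"
        using clique_bound_Suc_mono[OF s(2)] by (simp add: k_def d_def m)
      show "clique_bound (card C) (card (S - C)) (card (C - S))
          = (1 + real (card (S \<inter> C)) * real (card (C - S)) * clique_bound k d m)
            / (real (card S) + real (card (S \<inter> C)) * real (card (C - S)))"
        using split_S s by (simp add: k_def[symmetric] d_def[symmetric] m)
    qed (use less.prems in auto)
  qed
qed

lemma age_rec_isolated_clique:
  assumes C: "clique C" and closed: "\<And>i j. adj i j \<Longrightarrow> j \<in> C \<Longrightarrow> i \<in> C"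
    and S: "S \<subseteq> C" "S \<noteq> {}"
  shows "D S = (1 + real (card S) * (\<Sum>i\<in>C - S. D (insert i S)))
               / (real (card S) + real (card S) * real (card (C - S)))"
proof -
  have SN: "S \<subseteq> N" using S clique_subset[OF C] by auto
  have in_C: "links_into S i = real (card S)" if "i \<in> C - S" for i
  proof -
    have "adj i j" if "j \<in> S" for j
      using clique_adj[OF C, of i j] \<open>i \<in> C - S\<close> S that by auto
    then have "{j\<in>S. adj i j} = S" by auto
    then show ?thesis by simp
  qed
  have out_C: "links_into S i = 0" if "i \<notin> C" for i
  proof -
    have "{j\<in>S. adj i j} = {}" using that S closed by auto
    then show ?thesis by (simp only: card.empty of_nat_0)
  qed
  have sum_C: "(\<Sum>i\<in>N - S. links_into S i * f i) = real (card S) * (\<Sum>i\<in>C - S. f i)" for f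
  proof -
    have vanish: "links_into S i * f i = 0" if "i \<in> (N - S) - (C - S)" for i
    proof -
      have "i \<notin> C" using that by auto
      then show ?thesis using out_C by simp
    qed
    have "finite (N - S)" "C - S \<subseteq> N - S" using finite_nodes clique_subset[OF C] by auto
    then have "(\<Sum>i\<in>N - S. links_into S i * f i) = (\<Sum>i\<in>C - S. links_into S i * f i)"
      using vanish by (intro sum.mono_neutral_right) blast+
    then show ?thesis using in_C by (simp add: sum_distrib_left)
  qed
  show ?thesis
    using age_rec[OF SN S(2)] sum_C[of "\<lambda>i. D (insert i S)"] sum_C[of "\<lambda>_. 1"] by simp
qed

lemma age_clique_exact:
  assumes C: "clique C" and closed: "\<And>i j. adj i j \<Longrightarrow> j \<in> C \<Longrightarrow> i \<in> C"
    and "S \<subseteq> C" "S \<noteq> {}"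
  shows "D S = clique_bound (card C) 0 (card (C - S))"
  using assms(3,4)
proof (induction "card (C - S)" arbitrary: S rule: less_induct)
  case less
  have "finite C" using clique_subset[OF C] finite_nodes finite_subset by blast
  then have fin: "finite S" "finite C" using less.prems(1) finite_subset by auto
  have card_C: "card C = card S + card (C - S)"
    using fin less.prems by (simp add: card_Diff_subset card_mono)
  note rec = age_rec_isolated_clique[OF C closed less.prems]
  show ?case
  proof (cases "card (C - S)")
    case 0
    then have "C - S = {}" using fin by simp
    then show ?thesis using rec card_C by (simp only: card.empty) simp
  next
    case (Suc m)
    have "D (insert i S) = clique_bound (card C) 0 m" if "i \<in> C - S" for i
    proof -
      have "C - insert i S = (C - S) - {i}" by auto
      then have "card (C - insert i S) = m" using that Suc fin by (simp add: card_Diff_singleton)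
      moreover have "card (C - insert i S) < card (C - S)" using that fin by (intro psubset_card_mono) auto
      moreover have "insert i S \<subseteq> C" using that less.prems by auto
      ultimately show ?thesis using less.hyps by (metis insert_not_empty)
    qed
    then have "(\<Sum>i\<in>C - S. D (insert i S)) = real (Suc m) * clique_bound (card C) 0 m"
      using Suc by simp
    then show ?thesis using rec card_C Suc by (simp add: algebra_simps)
  qed
qed

lemma age_le_one: "x \<in> N \<Longrightarrow> D {x} \<le> 1"
  using age_le_inverse_card[of "{x}"] by simp

lemma clique_node_age_le:
  assumes "clique C" "y \<in> C"
  shows "D {y} \<le> clique_bound (card C) 0 (card C - 1)"
proof -
  have "{y} - C = {}" "C - {y} = C - {y}" using assms(2) by auto
  moreover have "card (C - {y}) = card C - 1" using assms(2) by simp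
  ultimately show ?thesis
    using age_le_clique_bound[OF assms(1), of "{y}"] assms clique_subset by auto
qed

lemma sum_nodes_split:
  "C \<subseteq> N \<Longrightarrow> (\<Sum>i\<in>N. f i) = (\<Sum>i\<in>C. f i) + (\<Sum>i\<in>N - C. f i)"
  using sum.subset_diff[of C N f] finite_nodes by (simp add: add.commute)

lemma sum_clique_age_le:
  assumes C: "clique C" "C \<noteq> {}"
  shows "(\<Sum>i\<in>C. D {i}) \<le> harm (card C)"
proof -
  have fin: "finite C" using C clique_subset finite_nodes finite_subset by blast
  have "(\<Sum>i\<in>C. D {i}) \<le> (\<Sum>i\<in>C. clique_bound (card C) 0 (card C - 1))"
    by (rule sum_mono) (rule clique_node_age_le[OF C(1)])
  also have "\<dots> = harm (card C)"
    using C fin clique_total_harm[of "card C"] by (simp add: Suc_le_eq card_gt_0_iff)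
  finally show ?thesis .
qed

lemma total_age_le_clique:
  assumes C: "clique C" "C \<noteq> {}"
  shows "(\<Sum>i\<in>N. D {i}) \<le> harm (card C) + real (card N - card C)"
proof -
  have fin: "finite C" using C clique_subset finite_nodes finite_subset by blast
  have "(\<Sum>i\<in>N - C. D {i}) \<le> real (card N - card C)"
    using sum_mono[of "N - C" "\<lambda>i. D {i}" "\<lambda>_. 1"] age_le_one clique_subset[OF C(1)] fin
    by (simp add: card_Diff_subset)
  then show ?thesis
    using sum_clique_age_le[OF C] sum_nodes_split[OF clique_subset[OF C(1)], of "\<lambda>i. D {i}"] by simp
qed

lemma total_age_isolated_clique:
  assumes C: "clique C" "C \<noteq> {}" and inside: "\<And>i j. adj i j \<Longrightarrow> i \<in> C \<and> j \<in> C"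
  shows "(\<Sum>i\<in>N. D {i}) = harm (card C) + real (card N - card C)"
proof -
  have fin: "finite C" using C clique_subset finite_nodes finite_subset by blast
  have "D {i} = clique_bound (card C) 0 (card C - 1)" if "i \<in> C" for i
    using age_clique_exact[OF C(1), of "{i}"] inside that by simp
  then have "(\<Sum>i\<in>C. D {i}) = harm (card C)"
    using C fin clique_total_harm[of "card C"] by (simp add: Suc_le_eq card_gt_0_iff)
  moreover have "D {i} = 1" if "i \<in> N - C" for i
  proof -
    have "nbrs i = {}" using that inside by (auto simp: nbrs_def)
    then show ?thesis using age_singleton[of i] that by simp
  qed
  then have "(\<Sum>i\<in>N - C. D {i}) = real (card N - card C)"
    using clique_subset[OF C(1)] fin by (simp add: card_Diff_subset)
  ultimately show ?thesis using sum_nodes_split[OF clique_subset[OF C(1)], of "\<lambda>i. D {i}"] by simp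
qed

end

section \<open>Uniform gossip networks\<close>

lemma Delta_rec:
  assumes fin: "finite N" and S: "S \<subseteq> N" "S \<noteq> {}"
  shows "Delta N l0 l ls S
    = (ls + (\<Sum>i\<in>nbr N l S. (\<Sum>j\<in>S. l i j) * Delta N l0 l ls (insert i S)))
      / ((\<Sum>j\<in>S. l0 j) + (\<Sum>i\<in>nbr N l S. \<Sum>j\<in>S. l i j))"
proof (cases "card N - card S")
  case 0
  then have "S = N" using S fin by (metis card_seteq diff_is_0_eq)
  then show ?thesis by (simp add: Delta_def nbr_def)
next
  case (Suc m)
  have "card N - card (insert i S) = m" if "i \<in> nbr N l S" for i
    using that Suc fin S finite_subset[OF S(1)] by (auto simp: nbr_def)
  then show ?thesis unfolding Delta_def Suc by (auto intro!: sum.cong)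
qed

lemma sum_nbr_eq_sum_diff:
  assumes "finite N" "\<And>i. i \<in> N - S \<Longrightarrow> \<not> 0 < (\<Sum>j\<in>S. l i j) \<Longrightarrow> g i = 0"
  shows "(\<Sum>i\<in>nbr N l S. g i) = (\<Sum>i\<in>N - S. g i)"
  using assms by (intro sum.mono_neutral_left) (auto simp: nbr_def)

definition linked :: "nat set set \<Rightarrow> nat \<Rightarrow> nat \<Rightarrow> bool" where
  "linked L i j \<longleftrightarrow> i \<noteq> j \<and> {i, j} \<in> L"

text \<open>Rescaling by \<open>(\<lambda> / n) / \<lambda>\<^sub>s\<close> makes all rates 1, see \<open>uniform_age_system\<close>.\<close>

definition scaled_age :: "nat \<Rightarrow> real \<Rightarrow> real \<Rightarrow> nat set set \<Rightarrow> nat set \<Rightarrow> real" where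
  "scaled_age n lam ls L S = Delta {1..n} (\<lambda>_. lam / real n) (unif_rate n lam L) ls S * (lam / real n) / ls"

lemma sum_unif_rate:
  "finite S \<Longrightarrow> (\<Sum>j\<in>S. unif_rate n lam L i j) = lam / real n * real (card {j\<in>S. linked L i j})"
  by (simp add: unif_rate_def linked_def sum.If_cases Int_def conj_commute)

lemma Delta_uniform_rec:
  fixes L :: "nat set set" and ls :: real
  assumes "0 < n" "0 < lam" and S: "S \<subseteq> {1..n}" "S \<noteq> {}"
  defines "r \<equiv> lam / real n" and "c \<equiv> \<lambda>i. real (card {j\<in>S. linked L i j})"
    and "Dl \<equiv> Delta {1..n} (\<lambda>_. lam / real n) (unif_rate n lam L) ls"
  shows "Dl S = (ls + r * (\<Sum>i\<in>{1..n} - S. c i * Dl (insert i S))) / (r * (real (card S) + (\<Sum>i\<in>{1..n} - S. c i)))"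
proof -
  have "r > 0" using assms by (simp add: r_def)
  have "finite S" using S(1) finite_subset by blast
  then have rate: "(\<Sum>j\<in>S. unif_rate n lam L i j) = r * c i" for i
    by (simp add: sum_unif_rate r_def c_def)
  have nbr_sum: "(\<Sum>i\<in>nbr {1..n} (unif_rate n lam L) S. r * c i * g i) = r * (\<Sum>i\<in>{1..n} - S. c i * g i)"
    for g
    using \<open>r > 0\<close> by (subst sum_nbr_eq_sum_diff) (auto simp: rate c_def sum_distrib_left mult.assoc zero_less_mult_iff)
  have "Dl S = (ls + (\<Sum>i\<in>nbr {1..n} (unif_rate n lam L) S. (\<Sum>j\<in>S. unif_rate n lam L i j) * Dl (insert i S)))
      / ((\<Sum>j\<in>S. r) + (\<Sum>i\<in>nbr {1..n} (unif_rate n lam L) S. \<Sum>j\<in>S. unif_rate n lam L i j))"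
    unfolding Dl_def r_def by (rule Delta_rec) (use S in auto)
  moreover have "(\<Sum>i\<in>nbr {1..n} (unif_rate n lam L) S. r * c i) = r * (\<Sum>i\<in>{1..n} - S. c i)"
    using nbr_sum[of "\<lambda>_. 1"] by simp
  ultimately show ?thesis unfolding rate nbr_sum by (simp add: algebra_simps)
qed

lemma uniform_age_system:
  assumes "0 < n" "0 < lam" "0 < ls"
  shows "age_system {1..n} (linked L) (scaled_age n lam ls L)"
proof
  fix S assume S: "S \<subseteq> {1..n}" "S \<noteq> {}"
  define r where "r = lam / real n"
  define Dl where "Dl = Delta {1..n} (\<lambda>_. r) (unif_rate n lam L) ls"
  define c where "c i = real (card {j\<in>S. linked L i j})" for i
  define X where "X = (\<Sum>i\<in>{1..n} - S. c i * Dl (insert i S))"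
  define q where "q = real (card S) + (\<Sum>i\<in>{1..n} - S. c i)"
  have "r > 0" using assms by (simp add: r_def)
  have "q \<noteq> 0"
  proof -
    have "(\<Sum>i\<in>{1..n} - S. c i) \<ge> 0" by (simp add: c_def sum_nonneg)
    moreover have "card S > 0" using S finite_subset[OF S(1)] by (simp add: card_gt_0_iff)
    ultimately show ?thesis by (simp add: q_def)
  qed
  have "Dl S = (ls + r * X) / (r * q)"
    using Delta_uniform_rec[OF assms(1,2) S, of L ls] by (simp add: r_def c_def Dl_def X_def q_def)
  then have "Dl S * r / ls = (1 + r / ls * X) / q"
    using \<open>r > 0\<close> \<open>q \<noteq> 0\<close> assms(3) by (simp add: field_simps)
  moreover have "r / ls * X = (\<Sum>i\<in>{1..n} - S. c i * (Dl (insert i S) * r / ls))"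
    by (simp add: X_def sum_distrib_left algebra_simps)
  ultimately show "scaled_age n lam ls L S
      = (1 + (\<Sum>i\<in>{1..n} - S. real (card {j\<in>S. linked L i j}) * scaled_age n lam ls L (insert i S)))
        / (real (card S) + (\<Sum>i\<in>{1..n} - S. real (card {j\<in>S. linked L i j})))"
    by (simp add: scaled_age_def Dl_def r_def c_def q_def)
qed simp

lemma Delta_i_scaled_age:
  "0 < n \<Longrightarrow> 0 < lam \<Longrightarrow> 0 < ls \<Longrightarrow> Delta_i n lam ls L i = ls / (lam / real n) * scaled_age n lam ls L {i}"
  by (simp add: Delta_i_def scaled_age_def)

lemma linked_mini_full: "linked (mini_full k) i j \<longleftrightarrow> i \<noteq> j \<and> i \<in> {1..k} \<and> j \<in> {1..k}"
  unfolding linked_def mini_full_def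
  by (auto simp: doubleton_eq_iff) (metis insert_commute linorder_neqE_nat)

lemma mini_full_Suc: "mini_full k \<union> star_edges k = mini_full (Suc k)"
proof -
  have "{j, Suc k} \<in> mini_full (Suc k)" if "1 \<le> j" "j \<le> k" for j
    using that le_imp_less_Suc unfolding mini_full_def by blast
  then show ?thesis unfolding mini_full_def star_edges_def by (auto simp: le_Suc_eq)
qed

lemma mini_full_total_age:
  assumes "1 \<le> k" "k \<le> n" "0 < lam" "0 < ls"
  shows "(\<Sum>i\<in>{1..n}. scaled_age n lam ls (mini_full k) {i}) = harm k + real (n - k)"
proof -
  interpret age_system "{1..n}" "linked (mini_full k)" "scaled_age n lam ls (mini_full k)"
    using assms by (intro uniform_age_system) auto
  have "clique {1..k}" using assms(2) unfolding clique_def by (auto simp: linked_mini_full)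
  then show ?thesis
    using total_age_isolated_clique[of "{1..k}"] assms by (simp add: linked_mini_full)
qed

section \<open>A clique with added links\<close>

text \<open>
  \<open>C\<close> plays the role of \<open>{1..k}\<close> and \<open>E\<close> that of the \<open>k\<close> added links, each of
  which leaves \<open>C\<close>.
\<close>

locale clique_extension = age_system +
  fixes C :: "'a set" and E :: "'a set set"
  assumes C_nodes: "C \<subseteq> N" and C_nonempty: "C \<noteq> {}"
    and adj_iff: "adj i j \<longleftrightarrow> i \<noteq> j \<and> (i \<in> C \<and> j \<in> C \<or> {i, j} \<in> E)"
    and E_links: "e \<in> E \<Longrightarrow> \<exists>a b. e = {a, b} \<and> a \<noteq> b \<and> a \<in> N \<and> b \<in> N \<and> a \<notin> C"
    and card_E: "card E = card C"
begin

lemma adj_sym: "adj i j \<Longrightarrow> adj j i"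
  by (auto simp: adj_iff insert_commute)

lemma adj_commute: "adj i j \<longleftrightarrow> adj j i"
  using adj_sym by blast

lemma clique_C: "clique C"
  using C_nodes by (auto simp: clique_def adj_iff)

lemma finite_C: "finite C"
  using C_nodes finite_nodes finite_subset by blast

lemma adj_nodes:
  assumes "adj i j"
  shows "i \<in> N \<and> j \<in> N"
proof -
  consider "i \<in> C \<and> j \<in> C" | "{i, j} \<in> E" using assms by (auto simp: adj_iff)
  then show ?thesis
  proof cases
    case 2
    then obtain a b where "{i, j} = {a, b}" "a \<in> N" "b \<in> N" using E_links by blast
    then show ?thesis by (auto simp: doubleton_eq_iff)
  qed (use C_nodes in auto)
qed

definition touched :: "'a set" where
  "touched = {x \<in> N - C. \<exists>v. adj x v}"

lemma touched_outside: "touched \<subseteq> N - C"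
  by (auto simp: touched_def)

lemma finite_touched: "finite touched"
  using finite_nodes by (simp add: touched_def)

lemma nbrs_touched_nonempty:
  assumes "x \<in> touched"
  shows "nbrs x \<noteq> {}"
proof -
  obtain v where "adj x v" using assms by (auto simp: touched_def)
  then have "v \<in> nbrs x"
    using adj_nodes[of x v] adj_sym[of x v] by (auto simp: nbrs_def adj_iff)
  then show ?thesis by blast
qed

lemma nbrs_of_touched: "x \<in> touched \<Longrightarrow> i \<in> nbrs x \<Longrightarrow> i \<in> C \<or> i \<in> touched"
  by (auto simp: touched_def nbrs_def)

lemma E_subset_touched_links: "E \<subseteq> (\<Union>x\<in>touched. (\<lambda>i. {i, x}) ` nbrs x)"
proof
  fix e assume "e \<in> E"
  then obtain a b where ab: "e = {a, b}" "a \<noteq> b" "a \<in> N" "b \<in> N" "a \<notin> C"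
    using E_links by blast
  then have "adj a b" using \<open>e \<in> E\<close> by (simp add: adj_iff)
  then have "a \<in> touched" "b \<in> nbrs a"
    using ab adj_sym by (auto simp: touched_def nbrs_def)
  then show "e \<in> (\<Union>x\<in>touched. (\<lambda>i. {i, x}) ` nbrs x)" using ab by (auto simp: insert_commute)
qed

lemma card_C_le_sum_degrees: "real (card C) \<le> (\<Sum>x\<in>touched. real (card (nbrs x)))"
proof -
  have "card C \<le> card (\<Union>x\<in>touched. (\<lambda>i. {i, x}) ` nbrs x)"
    unfolding card_E[symmetric] using E_subset_touched_links finite_touched finite_nbrs
    by (intro card_mono) auto
  also have "\<dots> \<le> (\<Sum>x\<in>touched. card ((\<lambda>i. {i, x}) ` nbrs x))"
    using finite_touched by (rule card_UN_le)
  also have "\<dots> \<le> (\<Sum>x\<in>touched. card (nbrs x))"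
    by (intro sum_mono card_image_le finite_nbrs)
  finally show ?thesis by (simp flip: of_nat_sum)
qed

lemma touched_nonempty: "touched \<noteq> {}"
  using card_C_le_sum_degrees C_nonempty finite_C by (auto simp: card_gt_0_iff)

lemma card_touched_le: "card touched \<le> card N - card C"
  using card_mono[OF _ touched_outside] finite_nodes card_Diff_subset[OF finite_C C_nodes] by simp

lemma total_age_le_of_inner_sum:
  assumes "(\<Sum>i\<in>C. D {i}) + (\<Sum>x\<in>touched. D {x})
             \<le> harm (card C) + real (card touched) - 1 + 1 / (real (card C) + 1)"
  shows "(\<Sum>i\<in>N. D {i}) \<le> harm (card C + 1) + real (card N - (card C + 1))"
proof -
  have split: "(\<Sum>i\<in>N - C. D {i}) = (\<Sum>i\<in>touched. D {i}) + (\<Sum>i\<in>N - C - touched. D {i})"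
    using sum_nodes_split[of touched] touched_outside finite_nodes
      sum.subset_diff[OF touched_outside, of "\<lambda>i. D {i}"] by simp
  have "(\<Sum>i\<in>N - C - touched. D {i}) \<le> real (card (N - C - touched))"
    using sum_mono[of "N - C - touched" "\<lambda>i. D {i}" "\<lambda>_. 1"] age_le_one by simp
  also have "card (N - C - touched) = card N - card C - card touched"
    using touched_outside finite_touched finite_C C_nodes finite_nodes
    by (simp add: card_Diff_subset)
  finally have rest: "(\<Sum>i\<in>N - C - touched. D {i}) \<le> real (card N - card C - card touched)" .
  have "1 \<le> card touched" using touched_nonempty finite_touched by (simp add: Suc_le_eq card_gt_0_iff)
  then have "real (card N - card C - card touched) = real (card N - (card C + 1)) + 1 - real (card touched)"
    using card_touched_le by (simp add: of_nat_diff)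
  moreover have "harm (card C + 1) = harm (card C) + 1 / (real (card C) + 1)"
    by (simp add: harm_Suc inverse_eq_divide)
  ultimately show ?thesis
    using assms rest split sum_nodes_split[OF C_nodes, of "\<lambda>i. D {i}"] by linarith
qed

lemma total_age_le_one_touched:
  assumes "card touched = 1"
  shows "(\<Sum>i\<in>N. D {i}) \<le> harm (card C + 1) + real (card N - (card C + 1))"
proof -
  obtain x where x: "touched = {x}" using assms card_1_singletonE by blast
  then have "x \<in> N - C" using touched_outside by auto
  have nbrs_C: "nbrs x \<subseteq> C" using nbrs_of_touched[of x] x by (auto simp: nbrs_def)
  have "card C \<le> card ((\<lambda>i. {i, x}) ` nbrs x)"
    unfolding card_E[symmetric] using E_subset_touched_links x finite_nbrs by (intro card_mono) auto
  also have "\<dots> \<le> card (nbrs x)" using finite_nbrs by (rule card_image_le)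
  finally have "card C \<le> card (nbrs x)" .
  moreover have "card (nbrs x) \<le> card C" using finite_C nbrs_C by (rule card_mono)
  ultimately have "nbrs x = C" using card_subset_eq[OF finite_C nbrs_C] by simp
  then have "adj x y" if "y \<in> C" for y using that adj_sym by (auto simp: nbrs_def)
  then have "clique (insert x C)"
    using clique_C adj_sym \<open>x \<in> N - C\<close> by (auto simp: clique_def)
  then show ?thesis
    using total_age_le_clique[of "insert x C"] \<open>x \<in> N - C\<close> finite_C by simp
qed

lemma touched_age_le:
  assumes "x \<in> touched"
  shows "D {x} \<le> 1 / 2 + 1 / (1 + real (card (nbrs x))) / 2"
proof -
  have "x \<in> N" using assms touched_outside by auto
  have "1 + real (card (nbrs x)) > 0" by simp
  then have "(1 + real (card (nbrs x)) / 2) / (1 + real (card (nbrs x)))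
      = 1 / 2 + 1 / (1 + real (card (nbrs x))) / 2"
    by (simp add: field_simps)
  then show ?thesis using age_singleton_le[OF \<open>x \<in> N\<close>] by simp
qed

lemma sum_touched_age_le:
  assumes m: "3 \<le> card touched"
  shows "(\<Sum>x\<in>touched. D {x}) \<le> real (card touched) - 1 + 1 / (real (card C) + 1)"
proof -
  define d where "d x = real (card (nbrs x))" for x
  define r where "r x = 1 / (1 + d x)" for x
  define X where "X = 1 / (real (card C) + 1)"
  have d1: "\<forall>x\<in>touched. 1 \<le> d x"
    using nbrs_touched_nonempty finite_nbrs by (auto simp: d_def Suc_le_eq card_gt_0_iff)
  have each: "D {x} \<le> 1 / 2 + r x / 2" if "x \<in> touched" for x
    using touched_age_le[OF that] by (simp add: r_def d_def)
  have "X \<ge> 0" by (simp add: X_def)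
  show ?thesis
  proof (cases "card touched = 3")
    case True
    define S where "S = (\<Sum>x\<in>touched. d x)"
    define Y where "Y = 1 / (S - 1)"
    have "real (card C) \<le> S" using card_C_le_sum_degrees by (simp add: S_def d_def)
    moreover have "3 \<le> S" using sum_mono[of touched "\<lambda>_. 1" d] d1 True by (simp add: S_def)
    ultimately have S_bound: "Y / 2 \<le> X" by (simp add: X_def Y_def field_simps)
    have "(\<Sum>x\<in>touched. D {x}) \<le> (\<Sum>x\<in>touched. 1 / 2 + r x / 2)"
      using each by (rule sum_mono)
    also have "\<dots> = 3 / 2 + (\<Sum>x\<in>touched. r x) / 2"
      using True by (simp add: sum.distrib sum_divide_distrib)
    also have "\<dots> \<le> 3 / 2 + (1 + Y) / 2"
      using sum_recip_succ_le[OF finite_touched touched_nonempty d1] True by (simp add: r_def S_def Y_def)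
    finally show ?thesis using S_bound True unfolding X_def[symmetric] by (simp add: field_simps)
  next
    case False
    have "D {x} \<le> 3 / 4" if "x \<in> touched" for x
    proof -
      have "r x \<le> 1 / 2" using d1 that by (simp add: r_def divide_simps)
      then show ?thesis using each[OF that] by simp
    qed
    then have "(\<Sum>x\<in>touched. D {x}) \<le> 3 / 4 * real (card touched)"
      using sum_mono[of touched "\<lambda>x. D {x}" "\<lambda>_. 3 / 4"] by simp
    then show ?thesis using False m \<open>X \<ge> 0\<close> unfolding X_def[symmetric] by linarith
  qed
qed

text \<open>
  Bounds for a single node of \<open>C\<close> and for a node of \<open>C\<close> together with an outside node.
\<close>

abbreviation core_bound :: real where
  "core_bound \<equiv> clique_bound (card C) 0 (card C - 1)"

abbreviation cross_bound :: real where
  "cross_bound \<equiv> clique_bound (card C) 1 (card C - 1)"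

lemma cross_bound_le_core_bound: "cross_bound \<le> core_bound"
  using C_nonempty finite_C by (intro clique_bound_antimono) (auto simp: card_gt_0_iff)

lemma cross_bound_le_half: "cross_bound \<le> 1 / 2"
proof -
  have "0 < card C" using C_nonempty finite_C by (simp add: card_gt_0_iff)
  then have "cross_bound \<le> 1 / (real (card C - (card C - 1)) + real (1::nat))"
    by (intro clique_bound_le) simp
  moreover have "card C - (card C - 1) = 1" using \<open>0 < card C\<close> by simp
  ultimately show ?thesis by simp
qed

lemma pair_age_cross:
  assumes "y \<in> C" "v \<in> N - C"
  shows "D {v, y} \<le> cross_bound"
proof -
  have "{v, y} - C = {v}" "C - {v, y} = C - {y}" using assms by auto
  moreover have "card (C - {y}) = card C - 1" using assms finite_C by simp
  ultimately show ?thesis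
    using age_le_clique_bound[OF clique_C, of "{v, y}"] assms C_nodes by auto
qed

lemma pair_age_core:
  assumes "y \<in> C" "i \<in> C" "i \<noteq> y"
  shows "D {y, i} \<le> clique_bound (card C) 0 (card C - 2)"
proof -
  have "{y, i} - C = {}" using assms by auto
  moreover have "card (C - {y, i}) = card C - 2"
    using assms finite_C by (simp add: card_Diff_subset)
  ultimately show ?thesis
    using age_le_clique_bound[OF clique_C, of "{y, i}"] assms C_nodes by auto
qed

lemma clique_node_age_le_cross:
  assumes y: "y \<in> C"
  defines "e \<equiv> real (card (nbrs y - C))"
  shows "D {y} \<le> (real (card C) * core_bound + e * cross_bound) / (real (card C) + e)"
proof -
  have C_nbrs: "C - {y} \<subseteq> nbrs y"
    using y C_nodes clique_C by (auto simp: nbrs_def clique_def)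
  have split: "nbrs y = (C - {y}) \<union> (nbrs y - C)" using C_nbrs by (auto simp: nbrs_def)
  have disj: "(C - {y}) \<inter> (nbrs y - C) = {}" by auto
  have fin: "finite (C - {y})" "finite (nbrs y - C)" using finite_C finite_nbrs by auto
  have sum_split: "(\<Sum>i\<in>nbrs y. D {y, i}) = (\<Sum>i\<in>C - {y}. D {y, i}) + (\<Sum>i\<in>nbrs y - C. D {y, i})"
    by (subst split) (rule sum.union_disjoint[OF fin disj])
  have "card (nbrs y) = card (C - {y}) + card (nbrs y - C)"
    by (subst split) (rule card_Un_disjoint[OF fin disj])
  then have card_nbrs: "1 + real (card (nbrs y)) = real (card C) + e"
    using y finite_C C_nonempty by (simp add: e_def of_nat_diff card_gt_0_iff Suc_le_eq)
  have "(\<Sum>i\<in>C - {y}. D {y, i}) \<le> (\<Sum>i\<in>C - {y}. clique_bound (card C) 0 (card C - 2))"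
    using pair_age_core y by (intro sum_mono) auto
  moreover have "(\<Sum>i\<in>nbrs y - C. D {y, i}) \<le> (\<Sum>i\<in>nbrs y - C. cross_bound)"
  proof (rule sum_mono)
    fix i assume "i \<in> nbrs y - C"
    then have "D {i, y} \<le> cross_bound" using pair_age_cross y by (auto simp: nbrs_def)
    then show "D {y, i} \<le> cross_bound" by (simp add: insert_commute)
  qed
  moreover have "real (card C) * core_bound = 1 + real (card C - 1) * clique_bound (card C) 0 (card C - 2)"
    using C_nonempty finite_C by (intro clique_total_rec) (simp add: Suc_le_eq card_gt_0_iff)
  ultimately have "1 + (\<Sum>i\<in>nbrs y. D {y, i}) \<le> real (card C) * core_bound + e * cross_bound"
    using y finite_C unfolding sum_split e_def by simp
  moreover have "0 < real (card C) + e"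
    using C_nonempty finite_C by (simp add: e_def card_gt_0_iff add_pos_nonneg)
  ultimately show ?thesis
    unfolding age_singleton[OF C_nodes[THEN subsetD, OF y]] card_nbrs
    by (simp add: divide_right_mono)
qed

definition clique_nbrs :: "'a \<Rightarrow> 'a set" where
  "clique_nbrs w = nbrs w \<inter> C"

lemma finite_clique_nbrs: "finite (clique_nbrs w)"
  using finite_C by (simp add: clique_nbrs_def)

lemma clique_nbrs_subset: "clique_nbrs w \<subseteq> C"
  by (simp add: clique_nbrs_def)

lemma outside_link_in_E: "w \<notin> C \<Longrightarrow> i \<in> clique_nbrs w \<Longrightarrow> {i, w} \<in> E"
  by (auto simp: clique_nbrs_def nbrs_def adj_iff)

end

section \<open>Two touched nodes\<close>

text \<open>
  For \<open>k \<le> 6\<close> the estimate \<open>cross_bound \<le> 363/1120\<close> fails; the inequalities needed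
  for such small cliques are decided by evaluating the bounds.
\<close>

lemma small_clique_no_link:
  assumes "2 \<le> k" "k \<le> 6"
  defines "u \<equiv> clique_bound k 1 (k - 1)" and "a \<equiv> clique_bound k 0 (k - 1)"
  shows "2 * u + (1 - u) * (1 / 2 + 1 / real k) \<le> 1 + 1 / (real k + 1) + real k * (a - u) / (real k + 2)"
proof -
  have "k = 2 \<or> k = 3 \<or> k = 4 \<or> k = 5 \<or> k = 6" using assms by auto
  then show ?thesis by (elim disjE) (simp_all add: u_def a_def eval_nat_numeral)
qed

lemma small_clique_link:
  assumes "3 \<le> k" "k \<le> 6"
  defines "u \<equiv> clique_bound k 1 (k - 1)" and "a \<equiv> clique_bound k 0 (k - 1)"
  shows "2 * u + (3 / 2 - 2 * u) * (1 / 3 + 1 / real k)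
    \<le> 1 + 1 / (real k + 1) + (real k - 1) * (a - u) / (real k + 2)"
proof -
  have "k = 3 \<or> k = 4 \<or> k = 5 \<or> k = 6" using assms by auto
  then show ?thesis by (elim disjE) (simp_all add: u_def a_def eval_nat_numeral)
qed

lemma small_clique_one_sided_link:
  assumes "1 \<le> k" "k \<le> 6"
  defines "u \<equiv> clique_bound k 1 (k - 1)" and "a \<equiv> clique_bound k 0 (k - 1)"
  shows "3 / 4 + (3 / 2 + (real k - 1) * u) / (real k + 1)
    \<le> 1 + 1 / (real k + 1) + (real k - 1) * (a - u) / (real k + 2)"
proof -
  have "k = 1 \<or> k = 2 \<or> k = 3 \<or> k = 4 \<or> k = 5 \<or> k = 6" using assms by auto
  then show ?thesis by (elim disjE) (simp_all add: u_def a_def eval_nat_numeral)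
qed

lemma large_clique_no_link:
  fixes u k :: real
  assumes u: "0 \<le> u" "u \<le> 363 / 1120" and k: "7 \<le> k"
  shows "2 * u + (1 - u) * (1 / 2 + 1 / k) \<le> 1 + 1 / (k + 1)"
proof -
  define c where "c = 1 / 2 + 1 / k"
  define U :: real where "U = 363 / 1120"
  have "c \<le> 2" using k by (simp add: c_def divide_simps)
  then have "(2 - c) * (u - U) \<le> 0" using u by (intro mult_nonneg_nonpos) (auto simp: U_def)
  moreover have "2 * u + (1 - u) * c - (2 * U + (1 - U) * c) = (2 - c) * (u - U)"
    by (simp add: algebra_simps)
  moreover have "2 * U + (1 - U) * c \<le> 1 + 1 / (k + 1)"
  proof -
    have "49 \<le> k * k" using mult_mono[OF k k] k by simp
    then show ?thesis using k by (simp add: U_def c_def field_simps)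
  qed
  ultimately show ?thesis by (simp add: c_def)
qed

lemma large_clique_link:
  fixes u k :: real
  assumes u: "0 \<le> u" "u \<le> 363 / 1120" and k: "7 \<le> k"
  shows "2 * u + (3 / 2 - 2 * u) * (1 / 3 + 1 / k) \<le> 1 + 1 / (k + 1)"
proof -
  define c where "c = 1 / 3 + 1 / k"
  define U :: real where "U = 363 / 1120"
  have "c \<le> 1" using k by (simp add: c_def divide_simps)
  then have "(2 - 2 * c) * (u - U) \<le> 0" using u by (intro mult_nonneg_nonpos) (auto simp: U_def)
  moreover have "2 * u + (3 / 2 - 2 * u) * c - (2 * U + (3 / 2 - 2 * U) * c) = (2 - 2 * c) * (u - U)"
    by (simp add: algebra_simps)
  moreover have "2 * U + (3 / 2 - 2 * U) * c \<le> 1 + 1 / (k + 1)"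
  proof -
    have "49 \<le> k * k" using mult_mono[OF k k] k by simp
    then show ?thesis using k by (simp add: U_def c_def field_simps)
  qed
  ultimately show ?thesis by (simp add: c_def)
qed

lemma large_clique_one_sided_link:
  fixes u k W :: real
  assumes u: "0 \<le> u" "u \<le> 363 / 1120" and k: "7 \<le> k"
    and W: "W \<le> (1 + (k - 1) * u) / (k + 1)"
  shows "(1 + W) / 2 + (1 + (k - 1) * u + W) / (k + 1) \<le> 1 + 1 / (k + 1)"
proof -
  define K where "K = k + 1"
  define V where "V = 1 + (K - 2) * (363 / 1120)"
  have "8 \<le> K" using k by (simp add: K_def)
  have "1 + (k - 1) * u \<le> V"
    using u k mult_left_mono[of u "363 / 1120" "k - 1"] by (simp add: V_def K_def)
  then have "W \<le> V / K" using W \<open>8 \<le> K\<close> by (smt (verit) K_def divide_right_mono)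
  then have "(1 + W) / 2 + (1 + (k - 1) * u + W) / (k + 1) \<le> (1 + V / K) / 2 + (V + V / K) / K"
    using \<open>1 + (k - 1) * u \<le> V\<close> \<open>8 \<le> K\<close> unfolding K_def[symmetric]
    by (intro add_mono divide_right_mono) auto
  also have "\<dots> \<le> 1 + 1 / K"
  proof -
    have "0 \<le> K^2" by simp
    then have "0 \<le> 31 * K^2 + 332 * K - 788" using \<open>8 \<le> K\<close> by linarith
    then have "0 \<le> K^2 * (31 * K^2 + 332 * K - 788)" using \<open>0 \<le> K^2\<close> by simp
    then show ?thesis using \<open>8 \<le> K\<close> by (simp add: V_def field_simps power2_eq_square)
  qed
  finally show ?thesis by (simp add: K_def)
qed

locale two_touched = clique_extension +
  fixes x z :: 'a
  assumes touched_eq: "touched = {x, z}" and x_ne_z: "x \<noteq> z"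
begin

lemma two_touched_swap: "two_touched N adj D C E z x"
  using clique_extension_axioms touched_eq x_ne_z
  by (simp add: two_touched_def two_touched_axioms_def insert_commute)

lemma x_outside: "x \<in> N - C" and z_outside: "z \<in> N - C"
  using touched_eq touched_outside by auto

lemma nbrs_x_eq: "nbrs x = clique_nbrs x \<union> (if adj x z then {z} else {})"
proof
  show "nbrs x \<subseteq> clique_nbrs x \<union> (if adj x z then {z} else {})"
  proof
    fix i assume i: "i \<in> nbrs x"
    then have "i \<noteq> x" "adj i x" by (auto simp: nbrs_def)
    then show "i \<in> clique_nbrs x \<union> (if adj x z then {z} else {})"
      using nbrs_of_touched[of x i] i touched_eq adj_sym by (auto simp: clique_nbrs_def)
  qed
  show "clique_nbrs x \<union> (if adj x z then {z} else {}) \<subseteq> nbrs x"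
    using z_outside x_ne_z adj_sym by (auto simp: clique_nbrs_def nbrs_def)
qed

lemma x_age_le:
  defines "p \<equiv> real (card (clique_nbrs x))"
  shows "D {x} \<le> (1 + p * cross_bound + of_bool (adj x z) * D {x, z}) / (1 + p + of_bool (adj x z))"
proof -
  let ?Z = "if adj x z then {z} else {}"
  have disj: "clique_nbrs x \<inter> ?Z = {}" using z_outside by (auto simp: clique_nbrs_def)
  have fin: "finite (clique_nbrs x)" "finite ?Z" by (simp_all add: finite_clique_nbrs)
  have "(\<Sum>i\<in>clique_nbrs x. D {x, i}) \<le> (\<Sum>i\<in>clique_nbrs x. cross_bound)"
    using pair_age_cross x_outside by (intro sum_mono) (auto simp: clique_nbrs_def)
  then have num: "1 + (\<Sum>i\<in>nbrs x. D {x, i}) \<le> 1 + p * cross_bound + of_bool (adj x z) * D {x, z}"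
    unfolding nbrs_x_eq sum.union_disjoint[OF fin disj] by (simp add: p_def)
  have den: "1 + real (card (nbrs x)) = 1 + p + of_bool (adj x z)"
    unfolding nbrs_x_eq card_Un_disjoint[OF fin disj] by (simp add: p_def)
  have "0 \<le> 1 + p + of_bool (adj x z)" by (simp add: p_def)
  then show ?thesis
    unfolding age_singleton[OF x_outside[THEN DiffD1]] den by (rule divide_right_mono[OF num])
qed

lemma z_age_le:
  defines "q \<equiv> real (card (clique_nbrs z))"
  shows "D {z} \<le> (1 + q * cross_bound + of_bool (adj x z) * D {x, z}) / (1 + q + of_bool (adj x z))"
proof -
  interpret swap: two_touched N adj D C E z x by (rule two_touched_swap)
  have "adj z x = adj x z" using adj_sym by blast
  then show ?thesis using swap.x_age_le by (simp add: q_def insert_commute)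
qed

lemma card_C_eq:
  "card C = card (clique_nbrs x) + card (clique_nbrs z) + of_bool (adj x z)"
proof -
  define U1 where "U1 = (\<lambda>i. {i, x}) ` clique_nbrs x"
  define U2 where "U2 = (\<lambda>i. {i, z}) ` clique_nbrs z"
  define U3 where "U3 = (if adj x z then {{x, z}} else {})"
  have "E \<subseteq> (\<lambda>i. {i, x}) ` nbrs x \<union> (\<lambda>i. {i, z}) ` nbrs z"
    using E_subset_touched_links touched_eq by simp
  also have "\<dots> \<subseteq> U1 \<union> U2 \<union> U3"
    using nbrs_x_eq two_touched.nbrs_x_eq[OF two_touched_swap] adj_sym
    by (auto simp: U1_def U2_def U3_def insert_commute)
  finally have "E \<subseteq> U1 \<union> U2 \<union> U3" .
  moreover have "U1 \<union> U2 \<union> U3 \<subseteq> E"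
    using outside_link_in_E x_outside z_outside by (auto simp: U1_def U2_def U3_def adj_iff)
  ultimately have E_eq: "E = U1 \<union> U2 \<union> U3" by blast
  have "inj_on (\<lambda>i. {i, x}) (clique_nbrs x)" "inj_on (\<lambda>i. {i, z}) (clique_nbrs z)"
    by (auto simp: inj_on_def doubleton_eq_iff)
  then have "card U1 = card (clique_nbrs x)" "card U2 = card (clique_nbrs z)"
    by (simp_all add: U1_def U2_def card_image)
  moreover have "card U3 = of_bool (adj x z)" by (simp add: U3_def)
  moreover have "U1 \<inter> U2 = {}" "(U1 \<union> U2) \<inter> U3 = {}"
    using x_ne_z x_outside z_outside clique_nbrs_subset[of x] clique_nbrs_subset[of z]
    by (auto simp: U1_def U2_def U3_def doubleton_eq_iff)
  moreover have "finite U1" "finite U2" "finite U3"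
    by (simp_all add: U1_def U2_def U3_def finite_clique_nbrs)
  ultimately show ?thesis
    using card_E E_eq by (simp add: card_Un_disjoint)
qed

lemma nbrs_clique_node_outside:
  assumes y: "y \<in> C"
  shows "nbrs y - C = {w \<in> {x, z}. y \<in> clique_nbrs w}"
proof (rule set_eqI)
  fix i
  show "i \<in> nbrs y - C \<longleftrightarrow> i \<in> {w \<in> {x, z}. y \<in> clique_nbrs w}"
  proof
    assume i: "i \<in> nbrs y - C"
    then have "adj i y" "i \<in> N" "i \<notin> C" by (auto simp: nbrs_def)
    then have "i \<in> touched" by (auto simp: touched_def)
    moreover have "y \<in> nbrs i"
      using adj_sym[OF \<open>adj i y\<close>] y C_nodes \<open>i \<notin> C\<close> by (auto simp: nbrs_def)
    ultimately show "i \<in> {w \<in> {x, z}. y \<in> clique_nbrs w}"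
      using touched_eq y by (simp add: clique_nbrs_def)
  next
    assume i: "i \<in> {w \<in> {x, z}. y \<in> clique_nbrs w}"
    then have "adj y i" "i \<in> N - C" using x_outside z_outside by (auto simp: clique_nbrs_def nbrs_def)
    then show "i \<in> nbrs y - C" using adj_sym[OF \<open>adj y i\<close>] y by (auto simp: nbrs_def)
  qed
qed

lemma clique_node_age_le_touched:
  assumes "y \<in> C"
  defines "e \<equiv> of_bool (y \<in> clique_nbrs x) + of_bool (y \<in> clique_nbrs z) :: real"
  shows "D {y} \<le> core_bound - e * (core_bound - cross_bound) / (real (card C) + 2)"
proof -
  have "{w \<in> {x, z}. y \<in> clique_nbrs w}
      = (if y \<in> clique_nbrs x then {x} else {}) \<union> (if y \<in> clique_nbrs z then {z} else {})"
    by auto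
  then have "real (card (nbrs y - C)) = e"
    unfolding nbrs_clique_node_outside[OF assms(1)] e_def using x_ne_z by simp
  then have "D {y} \<le> (real (card C) * core_bound + e * cross_bound) / (real (card C) + e)"
    using clique_node_age_le_cross[OF assms(1)] by simp
  also have "\<dots> \<le> core_bound - e * (core_bound - cross_bound) / (real (card C) + 2)"
    using assms finite_C cross_bound_le_core_bound
    by (intro average_le_linear_bound) (auto simp: e_def Suc_le_eq card_gt_0_iff)
  finally show ?thesis .
qed

lemma sum_clique_age_le_touched:
  "(\<Sum>y\<in>C. D {y}) \<le> harm (card C)
     - (real (card (clique_nbrs x)) + real (card (clique_nbrs z))) * (core_bound - cross_bound) / (real (card C) + 2)"
proof -
  have "(\<Sum>y\<in>C. D {y}) \<le> (\<Sum>y\<in>C. core_bound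
          - (of_bool (y \<in> clique_nbrs x) + of_bool (y \<in> clique_nbrs z)) * (core_bound - cross_bound) / (real (card C) + 2))"
    by (rule sum_mono) (rule clique_node_age_le_touched)
  also have "\<dots> = real (card C) * core_bound
      - (real (card (clique_nbrs x)) + real (card (clique_nbrs z))) * (core_bound - cross_bound) / (real (card C) + 2)"
    using finite_C clique_nbrs_subset[of x] clique_nbrs_subset[of z]
    by (simp add: sum_subtractf sum.distrib sum_divide_distrib[symmetric] sum_distrib_right[symmetric]
        Int_absorb1 Int_def[symmetric])
  also have "real (card C) * core_bound = harm (card C)"
    using C_nonempty finite_C by (intro clique_total_harm) (simp add: Suc_le_eq card_gt_0_iff)
  finally show ?thesis .
qed

lemma pair_age_le_half: "D {x, z} \<le> 1 / 2"
  using age_le_inverse_card[of "{x, z}"] x_outside z_outside x_ne_z by auto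

lemma triple_age_le_cross:
  assumes "i \<in> C"
  shows "D (insert i {x, z}) \<le> cross_bound"
proof -
  have "D (insert i {x, z})
      \<le> clique_bound (card C) (card (insert i {x, z} - C)) (card (C - insert i {x, z}))"
    by (rule age_le_clique_bound[OF clique_C]) (use assms x_outside z_outside C_nodes in auto)
  moreover have "insert i {x, z} - C = {x, z}" "C - insert i {x, z} = C - {i}"
    using assms x_outside z_outside by auto
  moreover have "card (C - {i}) = card C - 1" using assms finite_C by simp
  ultimately have "D (insert i {x, z}) \<le> clique_bound (card C) 2 (card C - 1)"
    using x_ne_z by (simp add: numeral_2_eq_2)
  also have "\<dots> \<le> cross_bound"
    using assms finite_C card_gt_0_iff[of C] by (intro clique_bound_antimono) auto
  finally show ?thesis .
qed

lemma links_into_pair_ge: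
  "real (card (clique_nbrs z)) \<le> (\<Sum>i\<in>N - {x, z}. links_into {x, z} i)"
proof -
  have "(\<Sum>i\<in>clique_nbrs z. 1) \<le> (\<Sum>i\<in>clique_nbrs z. links_into {x, z} i)"
  proof (rule sum_mono)
    fix i assume "i \<in> clique_nbrs z"
    then have "z \<in> {j\<in>{x, z}. adj i j}" by (simp add: clique_nbrs_def nbrs_def)
    then have "{j\<in>{x, z}. adj i j} \<noteq> {}" by blast
    then show "1 \<le> links_into {x, z} i" by (simp add: Suc_le_eq card_gt_0_iff)
  qed
  also have "\<dots> \<le> (\<Sum>i\<in>N - {x, z}. links_into {x, z} i)"
    using clique_nbrs_subset[of z] C_nodes x_outside z_outside finite_nodes
    by (intro sum_mono2) auto
  finally show ?thesis by simp
qed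

lemma pair_age_le_one_sided:
  assumes "adj x z" "clique_nbrs x = {}"
  defines "q \<equiv> real (card (clique_nbrs z))"
  shows "D {x, z} \<le> (1 + q * cross_bound) / (2 + q)"
proof -
  have S: "{x, z} \<subseteq> N" "{x, z} \<noteq> {}" using x_outside z_outside by auto
  have nbrs_x: "nbrs x = {z}" using nbrs_x_eq assms(1,2) by simp
  have nbrs_z: "nbrs z \<subseteq> clique_nbrs z \<union> {x}"
    using two_touched.nbrs_x_eq[OF two_touched_swap] by auto
  have "D {x, z} \<le> (1 + q * cross_bound) / (real (card {x, z}) + q)"
  proof (rule age_le_uniform_extensions[OF S])
    fix i assume i: "i \<in> N - {x, z}" "links_into {x, z} i > 0"
    have "{j\<in>{x, z}. adj i j} \<noteq> {}" using i(2) by (metis card.empty of_nat_0 less_irrefl)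
    then have "i \<in> nbrs x \<or> i \<in> nbrs z" using i(1) by (auto simp: nbrs_def)
    then have "i \<in> C" using i(1) nbrs_x nbrs_z clique_nbrs_subset by blast
    then show "D (insert i {x, z}) \<le> cross_bound" by (rule triple_age_le_cross)
  qed (use cross_bound_le_half x_ne_z links_into_pair_ge in \<open>simp_all add: q_def\<close>)
  then show ?thesis using x_ne_z by simp
qed

lemma clique_nbrs_x_eq_nbrs: "\<not> adj x z \<Longrightarrow> clique_nbrs x = nbrs x"
  using nbrs_x_eq by simp

lemma inner_sum_le_no_link:
  assumes "\<not> adj x z"
  shows "(\<Sum>y\<in>C. D {y}) + D {x} + D {z} \<le> harm (card C) + 1 + 1 / (real (card C) + 1)"
proof -
  interpret swap: two_touched N adj D C E z x by (rule two_touched_swap)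
  define p where "p = real (card (clique_nbrs x))"
  define q where "q = real (card (clique_nbrs z))"
  have "\<not> adj z x" using assms adj_commute by blast
  have "1 \<le> p" "1 \<le> q"
    using nbrs_touched_nonempty touched_eq finite_nbrs clique_nbrs_x_eq_nbrs[OF assms]
      swap.clique_nbrs_x_eq_nbrs[OF \<open>\<not> adj z x\<close>]
    by (auto simp: p_def q_def Suc_le_eq card_gt_0_iff)
  have k: "real (card C) = p + q" using card_C_eq assms by (simp add: p_def q_def)
  have "D {x} + D {z} \<le> (1 + p * cross_bound) / (1 + p) + (1 + q * cross_bound) / (1 + q)"
    using x_age_le z_age_le assms by (simp add: p_def q_def add_mono)
  also have "\<dots> \<le> 2 * cross_bound + (1 - cross_bound) * (1 / 2 + 1 / real (card C))"
    unfolding k using \<open>1 \<le> p\<close> \<open>1 \<le> q\<close> cross_bound_le_half by (intro two_fractions_no_link) auto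
  finally have touched: "D {x} + D {z} \<le> \<dots>" .
  show ?thesis
  proof (cases "card C \<le> 6")
    case True
    have "2 \<le> card C" using k \<open>1 \<le> p\<close> \<open>1 \<le> q\<close> by linarith
    then show ?thesis
      using touched sum_clique_age_le_touched small_clique_no_link[OF _ True] k
      by (simp add: p_def q_def)
  next
    case False
    then show ?thesis
      using touched sum_clique_age_le[OF clique_C C_nonempty] clique_bound_nonneg
        large_clique_no_link[of cross_bound "real (card C)"] cross_clique_bound_le_large[of "card C"]
      by simp
  qed
qed

lemma inner_sum_le_link:
  assumes "adj x z" "clique_nbrs x \<noteq> {}" "clique_nbrs z \<noteq> {}"
  shows "(\<Sum>y\<in>C. D {y}) + D {x} + D {z} \<le> harm (card C) + 1 + 1 / (real (card C) + 1)"
proof -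
  define p where "p = real (card (clique_nbrs x))"
  define q where "q = real (card (clique_nbrs z))"
  define W where "W = D {x, z}"
  have "1 \<le> p" "1 \<le> q"
    using assms finite_clique_nbrs by (auto simp: p_def q_def Suc_le_eq card_gt_0_iff)
  have k: "real (card C) = p + q + 1" using card_C_eq assms by (simp add: p_def q_def)
  have "D {x} + D {z} \<le> (1 + p * cross_bound + W) / (2 + p) + (1 + q * cross_bound + W) / (2 + q)"
    using x_age_le z_age_le assms by (simp add: p_def q_def W_def add_mono add.commute)
  also have "\<dots> \<le> 2 * cross_bound + (3 / 2 - 2 * cross_bound) * (1 / 3 + 1 / real (card C))"
    unfolding k using \<open>1 \<le> p\<close> \<open>1 \<le> q\<close> cross_bound_le_half pair_age_le_half
    by (intro two_fractions_link) (auto simp: W_def)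
  finally have touched: "D {x} + D {z} \<le> \<dots>" .
  show ?thesis
  proof (cases "card C \<le> 6")
    case True
    have "3 \<le> card C" using k \<open>1 \<le> p\<close> \<open>1 \<le> q\<close> by linarith
    then show ?thesis
      using touched sum_clique_age_le_touched small_clique_link[OF _ True] k
      by (simp add: p_def q_def)
  next
    case False
    then show ?thesis
      using touched sum_clique_age_le[OF clique_C C_nonempty] clique_bound_nonneg
        large_clique_link[of cross_bound "real (card C)"] cross_clique_bound_le_large[of "card C"]
      by simp
  qed
qed

lemma inner_sum_le_one_sided_link:
  assumes "adj x z" "clique_nbrs x = {}"
  shows "(\<Sum>y\<in>C. D {y}) + D {x} + D {z} \<le> harm (card C) + 1 + 1 / (real (card C) + 1)"
proof -
  define k where "k = real (card C)"
  define W where "W = D {x, z}"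
  have q: "real (card (clique_nbrs z)) = k - 1" using card_C_eq assms by (simp add: k_def)
  have "D {x} \<le> (1 + W) / 2" using x_age_le assms by (simp add: W_def)
  moreover have "D {z} \<le> (1 + (k - 1) * cross_bound + W) / (k + 1)"
    using z_age_le assms q by (simp add: W_def add.commute)
  ultimately have touched: "D {x} + D {z} \<le> (1 + W) / 2 + (1 + (k - 1) * cross_bound + W) / (k + 1)"
    by (rule add_mono)
  show ?thesis
  proof (cases "card C \<le> 6")
    case True
    have "W \<le> 1 / 2" using pair_age_le_half by (simp add: W_def)
    then have "(1 + W) / 2 \<le> 3 / 4" by simp
    moreover have "(1 + (k - 1) * cross_bound + W) / (k + 1) \<le> (3 / 2 + (k - 1) * cross_bound) / (k + 1)"
      using \<open>W \<le> 1 / 2\<close> by (intro divide_right_mono) (auto simp: k_def)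
    ultimately have "(1 + W) / 2 + (1 + (k - 1) * cross_bound + W) / (k + 1)
        \<le> 3 / 4 + (3 / 2 + (k - 1) * cross_bound) / (k + 1)"
      by (rule add_mono)
    then show ?thesis
      using touched sum_clique_age_le_touched small_clique_one_sided_link[OF _ True] C_nonempty finite_C q assms(2)
      by (simp add: k_def Suc_le_eq card_gt_0_iff)
  next
    case False
    have "W \<le> (1 + (k - 1) * cross_bound) / (k + 1)"
      using pair_age_le_one_sided[OF assms] q by (simp add: W_def add.commute)
    then show ?thesis
      using touched sum_clique_age_le[OF clique_C C_nonempty] clique_bound_nonneg False
        large_clique_one_sided_link[of cross_bound k W] cross_clique_bound_le_large[of "card C"]
      by (simp add: k_def)
  qed
qed

lemma two_touched_inner_sum_le:
  "(\<Sum>y\<in>C. D {y}) + D {x} + D {z} \<le> harm (card C) + 1 + 1 / (real (card C) + 1)"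
proof -
  interpret swap: two_touched N adj D C E z x by (rule two_touched_swap)
  consider "\<not> adj x z" | "adj x z" "clique_nbrs x = {}" | "adj x z" "clique_nbrs z = {}"
    | "adj x z" "clique_nbrs x \<noteq> {}" "clique_nbrs z \<noteq> {}" by blast
  then show ?thesis
  proof cases
    case 3
    then have "adj z x" using adj_sym by blast
    then show ?thesis using swap.inner_sum_le_one_sided_link 3 by simp
  qed (use inner_sum_le_no_link inner_sum_le_one_sided_link inner_sum_le_link in auto)
qed

end

context clique_extension
begin

theorem total_age_le_extension:
  "(\<Sum>i\<in>N. D {i}) \<le> harm (card C + 1) + real (card N - (card C + 1))"
proof -
  have "0 < card touched" using touched_nonempty finite_touched by (simp add: card_gt_0_iff)
  then consider "card touched = 1" | "card touched = 2" | "3 \<le> card touched" by linarith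
  then show ?thesis
  proof cases
    case 1
    then show ?thesis by (rule total_age_le_one_touched)
  next
    case 2
    then obtain x z where xz: "touched = {x, z}" "x \<noteq> z" by (meson card_2_iff)
    then interpret two_touched N adj D C E x z by unfold_locales
    show ?thesis
      using two_touched_inner_sum_le xz by (intro total_age_le_of_inner_sum) simp
  next
    case 3
    then show ?thesis
      using sum_clique_age_le[OF clique_C C_nonempty] sum_touched_age_le
      by (intro total_age_le_of_inner_sum) simp
  qed
qed

end

lemma mini_full_link_extension:
  assumes k: "1 \<le> k" "k < n" and "0 < lam" "0 < ls"
    and card_E: "card E = k"
    and E_pairs: "\<forall>e\<in>E. \<exists>a b. a \<in> {1..n} \<and> b \<in> {1..n} \<and> a \<noteq> b \<and> e = {a, b}"
    and E_new: "E \<inter> mini_full k = {}"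
  shows "clique_extension {1..n} (linked (mini_full k \<union> E)) (scaled_age n lam ls (mini_full k \<union> E)) {1..k} E"
proof (rule clique_extension.intro)
  show "age_system {1..n} (linked (mini_full k \<union> E)) (scaled_age n lam ls (mini_full k \<union> E))"
    using assms by (intro uniform_age_system) auto
  have mini_full_iff: "{i, j} \<in> mini_full k \<longleftrightarrow> i \<in> {1..k} \<and> j \<in> {1..k}" if "i \<noteq> j" for i j
    using linked_mini_full[of k i j] that by (simp add: linked_def)
  show "clique_extension_axioms {1..n} (linked (mini_full k \<union> E)) {1..k} E"
  proof
    fix e assume "e \<in> E"
    then obtain a b where ab: "a \<in> {1..n}" "b \<in> {1..n}" "a \<noteq> b" "e = {a, b}" using E_pairs by blast
    then have "\<not> (a \<in> {1..k} \<and> b \<in> {1..k})" using \<open>e \<in> E\<close> E_new mini_full_iff by blast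
    then show "\<exists>a b. e = {a, b} \<and> a \<noteq> b \<and> a \<in> {1..n} \<and> b \<in> {1..n} \<and> a \<notin> {1..k}"
      using ab by (metis insert_commute)
  qed (use k card_E mini_full_iff in \<open>auto simp: linked_def\<close>)
qed

theorem lemma4:
  fixes n k :: nat and lam ls :: real and E :: "nat set set"
  assumes "1 \<le> k" and "k \<le> n - 1"
    and "lam > 0" and "ls > 0"
    and "card E = k"
    and "\<forall>e\<in>E. \<exists>a b. a \<in> {1..n} \<and> b \<in> {1..n} \<and> a \<noteq> b \<and> e = {a, b}"
    and "E \<inter> mini_full k = {}"
  shows "(\<Sum>i=1..n. Delta_i n lam ls (mini_full k \<union> E) i)
         \<le> (\<Sum>i=1..n. Delta_i n lam ls (mini_full k \<union> star_edges k) i)"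
proof -
  have "k < n" "0 < n" using assms(1,2) by linarith+
  interpret clique_extension "{1..n}" "linked (mini_full k \<union> E)"
      "scaled_age n lam ls (mini_full k \<union> E)" "{1..k}" E
    using mini_full_link_extension \<open>k < n\<close> assms by blast
  define c where "c = ls / (lam / real n)"
  have "0 \<le> c" using assms(3,4) by (simp add: c_def)
  have "(\<Sum>i=1..n. Delta_i n lam ls (mini_full k \<union> E) i)
      = c * (\<Sum>i=1..n. scaled_age n lam ls (mini_full k \<union> E) {i})"
    using Delta_i_scaled_age \<open>0 < n\<close> assms(3,4) by (simp add: c_def sum_distrib_left)
  also have "\<dots> \<le> c * (harm (k + 1) + real (n - (k + 1)))"
    using total_age_le_extension \<open>0 \<le> c\<close> by (intro mult_left_mono) auto
  also have "\<dots> = c * (\<Sum>i=1..n. scaled_age n lam ls (mini_full (Suc k)) {i})"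
    using mini_full_total_age[of "Suc k" n lam ls] \<open>k < n\<close> assms(3,4) by simp
  also have "\<dots> = (\<Sum>i=1..n. Delta_i n lam ls (mini_full k \<union> star_edges k) i)"
    using Delta_i_scaled_age \<open>0 < n\<close> assms(3,4) by (simp add: c_def sum_distrib_left mini_full_Suc)
  finally show ?thesis .
qed

end
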